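(* Let $\alpha,\beta\in(0,\pi]$ and let $f:S_\alpha\to S_\beta$, $f(z)=z^{\beta/\alpha}$ (principal branch). Then for all $x,y\in S_\alpha$: if $\alpha\le\beta$, $$s_{S_\alpha}(x,y)\le s_{S_\beta}(f(x),f(y))\le\frac{\beta\sin(\alpha/2)}{\alpha\sin(\beta/2)}\,s_{S_\alpha}(x,y);$$ otherwise (if $\alpha>\beta$), $$\frac{\beta\sin(\alpha/2)}{\alpha\sin(\beta/2)}\,s_{S_\alpha}(x,y)\le s_{S_\beta}(f(x),f(y))\le s_{S_\alpha}(x,y).$$ Furthermore, the constants here are sharp.
   Context: $S_\theta=\{x\in\mathbb{C}:0<\arg(x)<\theta\}$. For a domain $G\subsetneq\mathbb{C}$, $s_G(x,y)=\frac{|x-y|}{\inf_{z\in\partial G}(|x-z|+|z-y|)}$. *)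

theory Defs
  imports "HOL-Analysis.Analysis"
begin

text \<open>The sector S_theta = {x in C : 0 < arg x < theta}, with the principal argument Arg
  (values in (-pi, pi]); for 0 < theta <= pi this is the paper's sector.\<close>
definition sector :: "real \<Rightarrow> complex set" where
  "sector \<theta> = {x. 0 < Arg x \<and> Arg x < \<theta>}"

definition tri_ratio :: "complex set \<Rightarrow> complex \<Rightarrow> complex \<Rightarrow> real" where
  "tri_ratio G x y = cmod (x - y) / (INF z\<in>frontier G. cmod (x - z) + cmod (z - y))"

definition sector_pow :: "real \<Rightarrow> real \<Rightarrow> complex \<Rightarrow> complex" where
  "sector_pow \<alpha> \<beta> z = z powr (complex_of_real (\<beta> / \<alpha>))"

end

theory Submission
  imports Defs
begin

text \<open>Write \<open>x = r e\<^sup>i\<^sup>\<phi>\<close> and \<open>y = \<rho> e\<^sup>i\<^sup>\<psi>\<close>. The boundary infimum in \<open>s\<^sub>S\<^sub>\<theta>(x, y)\<close>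
  is the distance from \<open>x\<close> to the mirror image of \<open>y\<close> in the boundary ray nearer to the pair, so
  \<open>s\<^sub>S\<^sub>\<theta>(x, y)\<^sup>2 = (sinh\<^sup>2 L + sin\<^sup>2 a) / (sinh\<^sup>2 L + sin\<^sup>2 b)\<close> with
  \<open>L = log(r / \<rho>) / 2\<close>, \<open>a = \<bar>\<phi> - \<psi>\<bar> / 2\<close> and \<open>b = min(\<phi> + \<psi>, 2\<theta> - \<phi> - \<psi>) / 2\<close>.
  The power map \<open>z \<mapsto> z\<^sup>k\<close>, \<open>k = \<beta> / \<alpha>\<close>, multiplies \<open>L\<close>, \<open>a\<close> and \<open>b\<close> by \<open>k\<close>.
  For \<open>k \<ge> 1\<close> both bounds then follow from elementary inequalities: \<open>k sinh L \<le> sinh (k L)\<close>,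
  \<open>sin (k x) \<le> k sin x\<close>, the monotonicity of \<open>sin (k t) / sin t\<close>, and the monotonicity of
  \<open>t\<^sup>2 / sinh\<^sup>2 t + t\<^sup>2 / 3\<close> and of \<open>t\<^sup>2 / sin\<^sup>2 t - t\<^sup>2 / 3\<close>, which compares the hyperbolic
  with the trigonometric part. The case \<open>k < 1\<close> is the case \<open>k > 1\<close> for the inverse map.
  Both constants are approached by pairs of points on the bisector, as \<open>r / \<rho> \<rightarrow> \<infinity>\<close> and as
  \<open>r / \<rho> \<rightarrow> 1\<close>.\<close>

section \<open>Inequalities for sine and hyperbolic sine\<close>

lemma sin_mult_le:
  fixes k x :: real
  assumes k: "1 \<le> k" and x: "0 \<le> x" "k * x \<le> pi"
  shows "sin (k * x) \<le> k * sin x"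
proof -
  let ?g = "\<lambda>t. k * sin t - sin (k * t)"
  have "?g 0 \<le> ?g x"
  proof (rule DERIV_nonneg_imp_nondecreasing[OF x(1)])
    fix t assume t: "0 \<le> t" "t \<le> x"
    have "t \<le> k * t" "k * t \<le> pi"
      using t k x by (auto simp: mult_le_cancel_right1 intro: order_trans[OF mult_left_mono])
    then have "cos (k * t) \<le> cos t" using t by (intro cos_monotone_0_pi_le) auto
    then have "0 \<le> k * cos t - k * cos (k * t)" using k by simp
    moreover have "(?g has_real_derivative k * cos t - k * cos (k * t)) (at t)"
      by (auto intro!: derivative_eq_intros)
    ultimately show "\<exists>d. (?g has_real_derivative d) (at t) \<and> 0 \<le> d" by blast
  qed
  then show ?thesis by simp
qed

lemma sinh_mult_ge:
  fixes k x :: real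
  assumes k: "1 \<le> k" and x: "0 \<le> x"
  shows "k * sinh x \<le> sinh (k * x)"
proof -
  let ?g = "\<lambda>t. sinh (k * t) - k * sinh t"
  have "?g 0 \<le> ?g x"
  proof (rule DERIV_nonneg_imp_nondecreasing[OF x])
    fix t assume t: "0 \<le> t" "t \<le> x"
    have "t \<le> k * t" using t k by (simp add: mult_le_cancel_right1)
    then have "cosh t \<le> cosh (k * t)" using t by (subst cosh_real_nonneg_le_iff) auto
    then have "0 \<le> k * cosh (k * t) - k * cosh t" using k by simp
    moreover have "(?g has_real_derivative k * cosh (k * t) - k * cosh t) (at t)"
      by (auto intro!: derivative_eq_intros)
    ultimately show "\<exists>d. (?g has_real_derivative d) (at t) \<and> 0 \<le> d" by blast
  qed
  then show ?thesis by simp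
qed

lemma sinh_mult_sq_ge:
  fixes k x :: real
  assumes "1 \<le> k"
  shows "k\<^sup>2 * (sinh x)\<^sup>2 \<le> (sinh (k * x))\<^sup>2"
proof -
  have "k * sinh \<bar>x\<bar> \<le> sinh (k * \<bar>x\<bar>)" by (rule sinh_mult_ge[OF assms]) simp
  moreover have "0 \<le> k * sinh \<bar>x\<bar>" using assms by simp
  ultimately have "(k * sinh \<bar>x\<bar>)\<^sup>2 \<le> (sinh (k * \<bar>x\<bar>))\<^sup>2" by (intro power_mono)
  also have "k * \<bar>x\<bar> = \<bar>k * x\<bar>" using assms by (simp add: abs_mult)
  finally show ?thesis by (simp add: power_mult_distrib)
qed

text \<open>This is \<open>k tan x \<le> tan (k x)\<close> with the denominators cleared, so that it also covers
  \<open>k x = pi / 2\<close> and \<open>k x > pi / 2\<close>.\<close>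
lemma mult_tan_le_tan_mult:
  fixes k x :: real
  assumes k: "1 \<le> k" and x: "0 \<le> x" "k * x \<le> pi"
  shows "k * cos (k * x) * sin x \<le> sin (k * x) * cos x"
proof -
  let ?g = "\<lambda>t. sin (k * t) * cos t - k * cos (k * t) * sin t"
  have "?g 0 \<le> ?g x"
  proof (rule DERIV_nonneg_imp_nondecreasing[OF x(1)])
    fix t assume t: "0 \<le> t" "t \<le> x"
    have "t \<le> k * t" "k * t \<le> pi"
      using t k x by (auto simp: mult_le_cancel_right1 intro: order_trans[OF mult_left_mono])
    then have "0 \<le> sin (k * t)" "0 \<le> sin t" using t by (auto intro!: sin_ge_zero)
    moreover have "0 \<le> k\<^sup>2 - 1" using k by simp
    ultimately have "0 \<le> (k\<^sup>2 - 1) * sin (k * t) * sin t" by simp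
    moreover have "(?g has_real_derivative (k\<^sup>2 - 1) * sin (k * t) * sin t) (at t)"
      by (auto intro!: derivative_eq_intros simp: algebra_simps power2_eq_square)
    ultimately show "\<exists>d. (?g has_real_derivative d) (at t) \<and> 0 \<le> d" by blast
  qed
  then show ?thesis by simp
qed

lemma sin_mult_div_sin_antimono:
  fixes k a b :: real
  assumes k: "1 \<le> k" and ab: "0 < a" "a \<le> b" "k * b < pi"
  shows "sin (k * b) / sin b \<le> sin (k * a) / sin a"
proof -
  let ?g = "\<lambda>t. - (sin (k * t) / sin t)"
  have "?g a \<le> ?g b"
  proof (rule DERIV_nonneg_imp_nondecreasing[OF ab(2)])
    fix t assume t: "a \<le> t" "t \<le> b"
    have "k * t \<le> k * b" "t \<le> k * t" using t ab k by (simp_all add: mult_le_cancel_right1)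
    then have "k * t < pi" using ab by linarith
    then have "0 < sin t" using \<open>t \<le> k * t\<close> t ab by (intro sin_gt_zero) linarith+
    then have "0 \<le> (sin (k * t) * cos t - k * cos (k * t) * sin t) / (sin t)\<^sup>2"
      using mult_tan_le_tan_mult[OF k, of t] \<open>k * t < pi\<close> t ab by simp
    moreover have "(?g has_real_derivative
        (sin (k * t) * cos t - k * cos (k * t) * sin t) / (sin t)\<^sup>2) (at t)"
      using \<open>0 < sin t\<close> by (auto intro!: derivative_eq_intros simp: field_simps power2_eq_square)
    ultimately show "\<exists>d. (?g has_real_derivative d) (at t) \<and> 0 \<le> d" by blast
  qed
  then show ?thesis by simp
qed

lemma le_sinh_mult_cosh:
  fixes t :: real
  assumes "0 \<le> t"
  shows "t \<le> sinh t * cosh t"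
proof -
  let ?g = "\<lambda>t. sinh t * cosh t - t"
  have "?g 0 \<le> ?g t"
  proof (rule DERIV_nonneg_imp_nondecreasing[OF assms])
    fix x :: real
    have "(?g has_real_derivative cosh x * cosh x + sinh x * sinh x - 1) (at x)"
      by (auto intro!: derivative_eq_intros)
    moreover have "cosh x * cosh x + sinh x * sinh x - 1 = 2 * (sinh x)\<^sup>2"
      using cosh_square_eq[of x] by (simp add: power2_eq_square)
    ultimately show "\<exists>d. (?g has_real_derivative d) (at x) \<and> 0 \<le> d" by auto
  qed
  then show ?thesis by simp
qed

lemma mult_cosh_le_sinh_add_cube:
  fixes t :: real
  assumes "0 \<le> t"
  shows "t * cosh t \<le> sinh t + sinh t ^ 3 / 3"
proof -
  let ?g = "\<lambda>t. sinh t + sinh t ^ 3 / 3 - t * cosh t"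
  have "?g 0 \<le> ?g t"
  proof (rule DERIV_nonneg_imp_nondecreasing[OF assms])
    fix x :: real assume x: "0 \<le> x" "x \<le> t"
    have "(?g has_real_derivative sinh x * (sinh x * cosh x - x)) (at x)"
      by (auto intro!: derivative_eq_intros simp: algebra_simps power2_eq_square)
    moreover have "0 \<le> sinh x * (sinh x * cosh x - x)" using le_sinh_mult_cosh[OF x(1)] x by simp
    ultimately show "\<exists>d. (?g has_real_derivative d) (at x) \<and> 0 \<le> d" by blast
  qed
  then show ?thesis by simp
qed

lemma sq_div_sinh_sq_plus_mono:
  fixes s t :: real
  assumes "0 < s" "s \<le> t"
  shows "s\<^sup>2 / (sinh s)\<^sup>2 + s\<^sup>2 / 3 \<le> t\<^sup>2 / (sinh t)\<^sup>2 + t\<^sup>2 / 3"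
proof (rule DERIV_nonneg_imp_nondecreasing[OF assms(2)])
  fix x :: real assume "s \<le> x" "x \<le> t"
  then have x: "0 < x" "0 < sinh x" using assms by auto
  have "((\<lambda>t. t\<^sup>2 / (sinh t)\<^sup>2 + t\<^sup>2 / 3) has_real_derivative
      2 * x * (sinh x + sinh x ^ 3 / 3 - x * cosh x) / (sinh x) ^ 3) (at x)"
    using x by (auto intro!: derivative_eq_intros simp: field_simps power2_eq_square power3_eq_cube)
  moreover have "0 \<le> 2 * x * (sinh x + sinh x ^ 3 / 3 - x * cosh x) / (sinh x) ^ 3"
    using mult_cosh_le_sinh_add_cube[of x] x by simp
  ultimately show "\<exists>d. ((\<lambda>t. t\<^sup>2 / (sinh t)\<^sup>2 + t\<^sup>2 / 3) has_real_derivative d) (at x) \<and> 0 \<le> d"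
    by blast
qed

lemma sin_mult_cos_le_self:
  fixes t :: real
  assumes "0 \<le> t"
  shows "sin t * cos t \<le> t"
proof -
  let ?g = "\<lambda>t. t - sin t * cos t"
  have "?g 0 \<le> ?g t"
  proof (rule DERIV_nonneg_imp_nondecreasing[OF assms])
    fix x :: real
    have "(?g has_real_derivative 1 - (cos x * cos x - sin x * sin x)) (at x)"
      by (auto intro!: derivative_eq_intros)
    moreover have "1 - (cos x * cos x - sin x * sin x) = 2 * (sin x)\<^sup>2"
      using sin_cos_squared_add[of x] by (simp add: power2_eq_square)
    ultimately show "\<exists>d. (?g has_real_derivative d) (at x) \<and> 0 \<le> d" by auto
  qed
  then show ?thesis by simp
qed

lemma mult_cos_add_cube_le_sin:
  fixes t :: real
  assumes "0 \<le> t" "t \<le> pi"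
  shows "t * cos t + sin t ^ 3 / 3 \<le> sin t"
proof -
  let ?g = "\<lambda>t. sin t - sin t ^ 3 / 3 - t * cos t"
  have "?g 0 \<le> ?g t"
  proof (rule DERIV_nonneg_imp_nondecreasing[OF assms(1)])
    fix x :: real assume x: "0 \<le> x" "x \<le> t"
    have "(?g has_real_derivative sin x * (x - sin x * cos x)) (at x)"
      by (auto intro!: derivative_eq_intros simp: algebra_simps power2_eq_square)
    moreover have "0 \<le> sin x" using x assms by (intro sin_ge_zero) auto
    then have "0 \<le> sin x * (x - sin x * cos x)" using sin_mult_cos_le_self[OF x(1)] by simp
    ultimately show "\<exists>d. (?g has_real_derivative d) (at x) \<and> 0 \<le> d" by blast
  qed
  then show ?thesis by simp
qed

lemma sq_div_sin_sq_minus_mono: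
  fixes s t :: real
  assumes "0 < s" "s \<le> t" "t < pi"
  shows "s\<^sup>2 / (sin s)\<^sup>2 - s\<^sup>2 / 3 \<le> t\<^sup>2 / (sin t)\<^sup>2 - t\<^sup>2 / 3"
proof (rule DERIV_nonneg_imp_nondecreasing[OF assms(2)])
  fix x :: real assume "s \<le> x" "x \<le> t"
  then have x: "0 < x" "x < pi" "0 < sin x" using assms by (auto intro: sin_gt_zero)
  have "((\<lambda>t. t\<^sup>2 / (sin t)\<^sup>2 - t\<^sup>2 / 3) has_real_derivative
      2 * x * (sin x - sin x ^ 3 / 3 - x * cos x) / (sin x) ^ 3) (at x)"
    using x by (auto intro!: derivative_eq_intros simp: field_simps power2_eq_square power3_eq_cube)
  moreover have "0 \<le> 2 * x * (sin x - sin x ^ 3 / 3 - x * cos x) / (sin x) ^ 3"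
    using mult_cos_add_cube_le_sin[of x] x by simp
  ultimately show "\<exists>d. ((\<lambda>t. t\<^sup>2 / (sin t)\<^sup>2 - t\<^sup>2 / 3) has_real_derivative d) (at x) \<and> 0 \<le> d"
    by blast
qed

lemma inverse_sinh_sq_diff_le:
  fixes k x :: real
  assumes k: "1 \<le> k" and x: "x \<noteq> 0"
  shows "1 / (sinh x)\<^sup>2 - k\<^sup>2 / (sinh (k * x))\<^sup>2 \<le> (k\<^sup>2 - 1) / 3"
proof -
  have "0 < \<bar>x\<bar>" "\<bar>x\<bar> \<le> \<bar>k * x\<bar>" using x k by (simp_all add: abs_mult)
  from sq_div_sinh_sq_plus_mono[OF this]
  have "x\<^sup>2 / (sinh x)\<^sup>2 + x\<^sup>2 / 3 \<le> (k * x)\<^sup>2 / (sinh (k * x))\<^sup>2 + (k * x)\<^sup>2 / 3"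
    by (simp add: power_mult_distrib)
  then have "x\<^sup>2 * (1 / (sinh x)\<^sup>2 - k\<^sup>2 / (sinh (k * x))\<^sup>2) \<le> x\<^sup>2 * ((k\<^sup>2 - 1) / 3)"
    by (simp add: algebra_simps add_divide_distrib diff_divide_distrib)
  then show ?thesis using x by simp
qed

lemma inverse_sin_sq_diff_ge:
  fixes k b :: real
  assumes k: "1 \<le> k" and b: "0 < b" "k * b < pi"
  shows "(k\<^sup>2 - 1) / 3 \<le> k\<^sup>2 / (sin (k * b))\<^sup>2 - 1 / (sin b)\<^sup>2"
proof -
  have "b \<le> k * b" using k b by simp
  from sq_div_sin_sq_minus_mono[OF b(1) this b(2)]
  have "b\<^sup>2 * ((k\<^sup>2 - 1) / 3) \<le> b\<^sup>2 * (k\<^sup>2 / (sin (k * b))\<^sup>2 - 1 / (sin b)\<^sup>2)"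
    by (simp add: algebra_simps add_divide_distrib diff_divide_distrib)
  then show ?thesis using b by simp
qed

lemma sin_sq_diff:
  fixes a b :: real
  shows "(sin b)\<^sup>2 - (sin a)\<^sup>2 = sin (b + a) * sin (b - a)"
proof -
  have "sin (b + a) * sin (b - a) = (sin b * cos a)\<^sup>2 - (cos b * sin a)\<^sup>2"
    by (simp add: sin_add sin_diff power2_eq_square algebra_simps)
  also have "\<dots> = (sin b)\<^sup>2 * (1 - (sin a)\<^sup>2) - (1 - (sin b)\<^sup>2) * (sin a)\<^sup>2"
    by (simp add: power_mult_distrib cos_squared_eq)
  finally show ?thesis by (simp add: algebra_simps)
qed

lemma sin_sq_diff_mult_le:
  fixes k a b :: real
  assumes k: "1 \<le> k" and ab: "0 \<le> a" "a \<le> b" "k * (b + a) \<le> pi"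
  shows "(sin (k * b))\<^sup>2 - (sin (k * a))\<^sup>2 \<le> k\<^sup>2 * ((sin b)\<^sup>2 - (sin a)\<^sup>2)"
proof -
  have "k * (b - a) \<le> k * (b + a)" using k ab by simp
  then have "k * (b - a) \<le> pi" using ab by linarith
  then have "sin (k * (b + a)) \<le> k * sin (b + a)" "sin (k * (b - a)) \<le> k * sin (b - a)"
    "0 \<le> sin (k * (b + a))" "0 \<le> sin (k * (b - a))"
    using sin_mult_le[OF k] ab k by (auto intro!: sin_ge_zero)
  then have "sin (k * (b + a)) * sin (k * (b - a)) \<le> (k * sin (b + a)) * (k * sin (b - a))"
    by (intro mult_mono) auto
  then show ?thesis
    using sin_sq_diff[of "k * b" "k * a"] sin_sq_diff[of b a]
    by (simp add: power2_eq_square algebra_simps)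
qed

section \<open>Scaling the squared triangular ratio\<close>

definition polar_tri_ratio_sq :: "real \<Rightarrow> real \<Rightarrow> real \<Rightarrow> real" where
  "polar_tri_ratio_sq L a b = ((sinh L)\<^sup>2 + (sin a)\<^sup>2) / ((sinh L)\<^sup>2 + (sin b)\<^sup>2)"

lemma polar_tri_ratio_sq_nonneg: "0 \<le> polar_tri_ratio_sq L a b"
  by (simp add: polar_tri_ratio_sq_def)

lemma polar_tri_ratio_sq_le_scaled:
  fixes k L a b :: real
  assumes k: "1 \<le> k" and ab: "0 \<le> a" "a \<le> b" "0 < b" "k * b \<le> pi / 2"
  shows "polar_tri_ratio_sq L a b \<le> polar_tri_ratio_sq (k * L) (k * a) (k * b)"
proof -
  define S where "S = (sinh L)\<^sup>2"
  define S' where "S' = (sinh (k * L))\<^sup>2"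
  define p where "p = (sin a)\<^sup>2"
  define q where "q = (sin b)\<^sup>2"
  define p' where "p' = (sin (k * a))\<^sup>2"
  define q' where "q' = (sin (k * b))\<^sup>2"
  have "b \<le> k * b" "k * a \<le> k * b" using k ab by (simp_all add: mult_left_mono)
  then have "b \<le> pi / 2" "k * b < pi" using ab pi_gt_zero by linarith+
  then have sin_pos: "0 < sin b" "0 < sin (k * b)" and "0 \<le> sin a"
    using ab k pi_gt_zero by (auto intro!: sin_gt_zero sin_ge_zero)
  then have "0 < q" "0 < q'" "0 \<le> S" "0 \<le> S'" by (simp_all add: S_def S'_def q_def q'_def)
  have "k\<^sup>2 * S \<le> S'" unfolding S_def S'_def by (rule sinh_mult_sq_ge[OF k])
  moreover have "p \<le> q"
    unfolding p_def q_def using \<open>0 \<le> sin a\<close> \<open>b \<le> pi / 2\<close> ab pi_gt_zero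
    by (intro power_mono sin_monotone_2pi_le) auto
  ultimately have "k\<^sup>2 * S * (q - p) \<le> S' * (q - p)" by (intro mult_right_mono) auto
  moreover have "S * (q' - p') \<le> S * (k\<^sup>2 * (q - p))"
    using sin_sq_diff_mult_le[OF k ab(1,2)] ab \<open>k * a \<le> k * b\<close> \<open>0 \<le> S\<close>
    unfolding p_def q_def p'_def q'_def by (intro mult_left_mono) (auto simp: distrib_left)
  moreover have "p * q' \<le> p' * q"
  proof (cases "a = 0")
    case False
    then have "sin (k * b) / sin b \<le> sin (k * a) / sin a"
      using ab k \<open>k * b < pi\<close> by (intro sin_mult_div_sin_antimono) auto
    moreover have "0 < sin a" using False ab \<open>b \<le> pi / 2\<close> pi_gt_zero by (intro sin_gt_zero) auto
    ultimately have "sin (k * b) * sin a \<le> sin (k * a) * sin b"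
      using sin_pos by (simp add: field_simps)
    then have "(sin (k * b) * sin a)\<^sup>2 \<le> (sin (k * a) * sin b)\<^sup>2"
      using sin_pos \<open>0 < sin a\<close> by (intro power_mono) auto
    then show ?thesis by (simp add: p_def p'_def q_def q'_def power_mult_distrib mult.commute)
  qed (simp add: p_def p'_def)
  ultimately have "(S + p) * (S' + q') \<le> (S' + p') * (S + q)"
    by (simp add: algebra_simps)
  then show ?thesis
    using \<open>0 < q\<close> \<open>0 < q'\<close> \<open>0 \<le> S\<close> \<open>0 \<le> S'\<close>
    by (simp add: polar_tri_ratio_sq_def divide_simps flip: S_def S'_def p_def q_def p'_def q'_def)
qed

text \<open>Divided by \<open>sinh\<^sup>2 L sinh\<^sup>2 (k L) sin\<^sup>2 b sin\<^sup>2 (k b)\<close> this reads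
  \<open>1 / sinh\<^sup>2 L - k\<^sup>2 / sinh\<^sup>2 (k L) \<le> (k\<^sup>2 - 1) / 3 \<le> k\<^sup>2 / sin\<^sup>2 (k b) - 1 / sin\<^sup>2 b\<close>.\<close>
lemma sinh_sin_sq_scaling_ineq:
  fixes k L b :: real
  assumes k: "1 \<le> k" and b: "0 < b" "k * b < pi"
  shows "0 \<le> (sinh L)\<^sup>2 * (sinh (k * L))\<^sup>2 * (k\<^sup>2 * (sin b)\<^sup>2 - (sin (k * b))\<^sup>2)
              + (sin b)\<^sup>2 * (sin (k * b))\<^sup>2 * (k\<^sup>2 * (sinh L)\<^sup>2 - (sinh (k * L))\<^sup>2)"
proof (cases "L = 0")
  case False
  define S where "S = (sinh L)\<^sup>2"
  define S' where "S' = (sinh (k * L))\<^sup>2"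
  define q where "q = (sin b)\<^sup>2"
  define q' where "q' = (sin (k * b))\<^sup>2"
  have "b \<le> k * b" using k b by simp
  then have "b < pi" using b by linarith
  then have "0 < sin b" "0 < sin (k * b)" using b k by (auto intro!: sin_gt_zero)
  then have "0 < S" "0 < S'" "0 < q" "0 < q'" using False k by (simp_all add: S_def S'_def q_def q'_def)
  have "1 / S - k\<^sup>2 / S' \<le> k\<^sup>2 / q' - 1 / q"
    unfolding S_def S'_def q_def q'_def
    using inverse_sinh_sq_diff_le[OF k False] inverse_sin_sq_diff_ge[OF k b] by (rule order_trans)
  then have "(1 / S - k\<^sup>2 / S') * (S * S' * q * q') \<le> (k\<^sup>2 / q' - 1 / q) * (S * S' * q * q')"
    using \<open>0 < S\<close> \<open>0 < S'\<close> \<open>0 < q\<close> \<open>0 < q'\<close> by (intro mult_right_mono) auto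
  then have "S' * q * q' - k\<^sup>2 * S * q * q' \<le> k\<^sup>2 * S * S' * q - S * S' * q'"
    using \<open>0 < S\<close> \<open>0 < S'\<close> \<open>0 < q\<close> \<open>0 < q'\<close> by (simp add: algebra_simps)
  then have "0 \<le> S * S' * (k\<^sup>2 * q - q') + q * q' * (k\<^sup>2 * S - S')" by (simp add: algebra_simps)
  then show ?thesis by (simp only: S_def S'_def q_def q'_def)
qed simp

lemma polar_tri_ratio_sq_scaled_le:
  fixes k L a b :: real
  assumes k: "1 \<le> k" and ab: "0 \<le> a" "a \<le> b" "0 < b" "k * b \<le> pi / 2"
  shows "polar_tri_ratio_sq (k * L) (k * a) (k * b)
           \<le> (k * sin b / sin (k * b))\<^sup>2 * polar_tri_ratio_sq L a b"
proof -
  define S where "S = (sinh L)\<^sup>2"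
  define S' where "S' = (sinh (k * L))\<^sup>2"
  define p where "p = (sin a)\<^sup>2"
  define q where "q = (sin b)\<^sup>2"
  define p' where "p' = (sin (k * a))\<^sup>2"
  define q' where "q' = (sin (k * b))\<^sup>2"
  have "b \<le> k * b" "k * a \<le> k * b" using k ab by (simp_all add: mult_left_mono)
  then have "k * a \<le> pi" "k * b < pi" "b < pi" using pi_gt_zero ab by linarith+
  have "0 < sin b" "0 < sin (k * b)" "0 \<le> sin (k * a)"
    using \<open>k * a \<le> pi\<close> \<open>k * b < pi\<close> \<open>b < pi\<close> ab k
    by (simp_all add: sin_gt_zero sin_ge_zero)
  then have "0 < q" "0 < q'" "0 \<le> S" "0 \<le> S'" "0 \<le> p" "0 \<le> p'"
    by (simp_all add: S_def S'_def p_def q_def p'_def q'_def)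
  have "k\<^sup>2 * S \<le> S'" unfolding S_def S'_def by (rule sinh_mult_sq_ge[OF k])
  have "(sin (k * a))\<^sup>2 \<le> (k * sin a)\<^sup>2" "(sin (k * b))\<^sup>2 \<le> (k * sin b)\<^sup>2"
    using sin_mult_le[OF k] ab \<open>0 \<le> sin (k * a)\<close> \<open>0 < sin (k * b)\<close> \<open>k * a \<le> pi\<close> \<open>k * b < pi\<close>
    by (auto intro!: power_mono)
  then have "p' \<le> k\<^sup>2 * p" "q' \<le> k\<^sup>2 * q" by (simp_all add: p_def p'_def q_def q'_def power_mult_distrib)
  have key: "0 \<le> S * S' * (k\<^sup>2 * q - q') + q * q' * (k\<^sup>2 * S - S')"
    unfolding S_def S'_def q_def q'_def using k ab(3) \<open>k * b < pi\<close> by (rule sinh_sin_sq_scaling_ineq)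
  txt \<open>The difference of the two sides of \<open>main\<close> is \<open>key\<close> plus the two nonnegative terms
    \<open>k\<^sup>2 q p S' - q' p' S\<close> and \<open>q q' (k\<^sup>2 p - p')\<close>.\<close>
  have "S * (q' * p') \<le> S * ((k\<^sup>2 * q) * (k\<^sup>2 * p))"
    using \<open>p' \<le> k\<^sup>2 * p\<close> \<open>q' \<le> k\<^sup>2 * q\<close> \<open>0 \<le> p'\<close> \<open>0 < q'\<close> \<open>0 \<le> S\<close>
    by (intro mult_left_mono mult_mono) auto
  moreover have "(k\<^sup>2 * q * p) * (k\<^sup>2 * S) \<le> (k\<^sup>2 * q * p) * S'"
    using \<open>k\<^sup>2 * S \<le> S'\<close> \<open>0 < q\<close> \<open>0 \<le> p\<close> by (intro mult_left_mono) auto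
  moreover have "0 \<le> q * q' * (k\<^sup>2 * p - p')" using \<open>p' \<le> k\<^sup>2 * p\<close> \<open>0 < q\<close> \<open>0 < q'\<close> by simp
  ultimately have main: "q' * ((S' + p') * (S + q)) \<le> k\<^sup>2 * q * ((S + p) * (S' + q'))"
    using key by (simp add: algebra_simps)
  have "(S' + p') / (S' + q') = q' * ((S' + p') * (S + q)) / (q' * (S + q) * (S' + q'))"
    using \<open>0 < q\<close> \<open>0 < q'\<close> \<open>0 \<le> S\<close> \<open>0 \<le> S'\<close> by (simp add: ac_simps)
  also have "\<dots> \<le> k\<^sup>2 * q * ((S + p) * (S' + q')) / (q' * (S + q) * (S' + q'))"
    using main \<open>0 < q\<close> \<open>0 < q'\<close> \<open>0 \<le> S\<close> \<open>0 \<le> S'\<close> by (intro divide_right_mono) auto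
  also have "\<dots> = k\<^sup>2 * q / q' * ((S + p) / (S + q))"
    using \<open>0 < q\<close> \<open>0 < q'\<close> \<open>0 \<le> S\<close> \<open>0 \<le> S'\<close> by (simp add: ac_simps)
  also have "k\<^sup>2 * q / q' = (k * sin b / sin (k * b))\<^sup>2"
    by (simp add: q_def q'_def power_divide power_mult_distrib)
  finally show ?thesis
    using \<open>0 < q\<close> \<open>0 < q'\<close> \<open>0 \<le> S\<close> \<open>0 \<le> S'\<close>
    by (simp add: polar_tri_ratio_sq_def flip: S_def S'_def p_def q_def p'_def q'_def)
qed

lemma polar_tri_ratio_sq_scaled_bounds:
  fixes k \<theta> L a b :: real
  assumes k: "1 \<le> k" and ab: "0 \<le> a" "a \<le> b" "0 < b" "b \<le> \<theta> / 2" and k\<theta>: "k * \<theta> \<le> pi"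
  shows "polar_tri_ratio_sq L a b \<le> polar_tri_ratio_sq (k * L) (k * a) (k * b)"
    and "polar_tri_ratio_sq (k * L) (k * a) (k * b)
           \<le> (k * sin (\<theta> / 2) / sin (k * \<theta> / 2))\<^sup>2 * polar_tri_ratio_sq L a b"
proof -
  have "k * b \<le> k * (\<theta> / 2)" using k ab by (simp add: mult_left_mono)
  then have kb: "k * b \<le> pi / 2" using k\<theta> by simp
  then show "polar_tri_ratio_sq L a b \<le> polar_tri_ratio_sq (k * L) (k * a) (k * b)"
    by (rule polar_tri_ratio_sq_le_scaled[OF k ab(1-3)])
  have "b \<le> k * b" "\<theta> / 2 \<le> k * (\<theta> / 2)" using k ab by simp_all
  then have "b < pi" "k * b < pi" "\<theta> / 2 < pi" "k * \<theta> / 2 < pi" using kb k\<theta> pi_gt_zero by linarith+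
  then have "0 < sin b" "0 < sin (k * b)" "0 < sin (\<theta> / 2)" "0 < sin (k * \<theta> / 2)"
    using ab k by (auto intro!: sin_gt_zero)
  moreover have "sin (k * (\<theta> / 2)) / sin (\<theta> / 2) \<le> sin (k * b) / sin b"
    using \<open>k * \<theta> / 2 < pi\<close> by (intro sin_mult_div_sin_antimono[OF k ab(3,4)]) simp
  ultimately have "k * sin b / sin (k * b) \<le> k * sin (\<theta> / 2) / sin (k * \<theta> / 2)"
    using k by (simp add: field_simps mult_left_mono)
  then have "(k * sin b / sin (k * b))\<^sup>2 \<le> (k * sin (\<theta> / 2) / sin (k * \<theta> / 2))\<^sup>2"
    using k \<open>0 < sin b\<close> \<open>0 < sin (k * b)\<close> by (intro power_mono) auto
  then show "polar_tri_ratio_sq (k * L) (k * a) (k * b)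
      \<le> (k * sin (\<theta> / 2) / sin (k * \<theta> / 2))\<^sup>2 * polar_tri_ratio_sq L a b"
    using polar_tri_ratio_sq_scaled_le[OF k ab(1-3) kb, of L] polar_tri_ratio_sq_nonneg[of L a b]
    by (meson mult_right_mono order_trans)
qed

section \<open>The triangular ratio metric of a sector\<close>

text \<open>The reflection in the bisector of the sector; it exchanges the two boundary rays.\<close>
definition sector_reflect :: "real \<Rightarrow> complex \<Rightarrow> complex" where
  "sector_reflect \<theta> z = cis \<theta> * cnj z"

lemma sector_reflect_involutive [simp]: "sector_reflect \<theta> (sector_reflect \<theta> z) = z"
  by (simp add: sector_reflect_def cis_cnj cis_mult flip: mult.assoc)

lemma norm_sector_reflect_diff:
  "cmod (sector_reflect \<theta> x - sector_reflect \<theta> y) = cmod (x - y)"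
proof -
  have "sector_reflect \<theta> x - sector_reflect \<theta> y = cis \<theta> * cnj (x - y)"
    by (simp add: sector_reflect_def algebra_simps)
  then show ?thesis by (simp add: norm_mult flip: complex_cnj_diff)
qed

lemma sector_reflect_rcis: "sector_reflect \<theta> (rcis r \<phi>) = rcis r (\<theta> - \<phi>)"
  by (simp add: sector_reflect_def rcis_def cis_cnj cis_mult mult.left_commute)

lemma sector_eq_halfplanes:
  assumes "0 < \<theta>" "\<theta> \<le> pi"
  shows "sector \<theta> = {z. 0 < Im z \<and> 0 < Im (sector_reflect \<theta> z)}"
proof (intro set_eqI iffI; clarsimp)
  fix z assume "z \<in> sector \<theta>"
  then have \<phi>: "0 < Arg z" "Arg z < \<theta>" by (auto simp: sector_def)
  then have "0 < Im z" using assms Arg_lt_pi by fastforce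
  moreover have "z \<noteq> 0" using \<phi> by (auto simp: Arg_zero)
  moreover have "0 < sin (\<theta> - Arg z)" using \<phi> assms by (intro sin_gt_zero) auto
  ultimately show "0 < Im z \<and> 0 < Im (sector_reflect \<theta> z)"
    by (metis rcis_cmod_Arg sector_reflect_rcis Im_rcis zero_less_mult_iff zero_less_norm_iff)
next
  fix z assume z: "0 < Im z" "0 < Im (sector_reflect \<theta> z)"
  then have \<phi>: "0 < Arg z" "Arg z < pi" using Arg_lt_pi by blast+
  have "Im (sector_reflect \<theta> z) = cmod z * sin (\<theta> - Arg z)"
    by (metis rcis_cmod_Arg sector_reflect_rcis Im_rcis)
  then have "0 < sin (\<theta> - Arg z)" using z by (simp add: zero_less_mult_iff)
  moreover have "sin (\<theta> - Arg z) \<le> 0" if "\<theta> \<le> Arg z"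
    using sin_ge_zero[of "Arg z - \<theta>"] that \<phi> assms by (simp add: sin_diff mult.commute)
  ultimately show "z \<in> sector \<theta>" using \<phi> by (force simp: sector_def)
qed

lemma frontier_sector:
  assumes "0 < \<theta>" "\<theta> \<le> pi"
  shows "frontier (sector \<theta>) = {z. 0 \<le> Im z \<and> 0 \<le> Im (sector_reflect \<theta> z)
                                    \<and> (Im z = 0 \<or> Im (sector_reflect \<theta> z) = 0)}"
proof -
  define n where "n = - \<i> * cis \<theta>"
  have Im_reflect: "Im (sector_reflect \<theta> z) = n \<bullet> z" for z
    by (simp add: n_def sector_reflect_def inner_complex_def)
  have halfplanes: "sector \<theta> = {z. \<i> \<bullet> z > 0} \<inter> {z. n \<bullet> z > 0}"
    by (auto simp: sector_eq_halfplanes[OF assms] Im_reflect inner_complex_def)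
  have "n \<noteq> 0" by (simp add: n_def)
  have "cis (\<theta> / 2) \<in> sector \<theta>"
    using assms by (simp add: sector_def Arg_cis)
  then have "rel_interior {z. \<i> \<bullet> z > 0} \<inter> rel_interior {z. n \<bullet> z > 0} \<noteq> {}"
    unfolding halfplanes rel_interior_open[OF open_halfspace_gt] by blast
  then have "closure (sector \<theta>) = closure {z. \<i> \<bullet> z > 0} \<inter> closure {z. n \<bullet> z > 0}"
    unfolding halfplanes by (intro closure_Int_convex convex_halfspace_gt)
  also have "\<dots> = {z. 0 \<le> Im z \<and> 0 \<le> Im (sector_reflect \<theta> z)}"
    using \<open>n \<noteq> 0\<close> by (subst (1 2) closure_halfspace_gt) (auto simp: Im_reflect)
  moreover have "open (sector \<theta>)" unfolding halfplanes by (intro open_Int open_halfspace_gt)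
  ultimately have "frontier (sector \<theta>) = {z. 0 \<le> Im z \<and> 0 \<le> Im (sector_reflect \<theta> z)} - sector \<theta>"
    by (simp add: frontier_def interior_open)
  also have "\<dots> = {z. 0 \<le> Im z \<and> 0 \<le> Im (sector_reflect \<theta> z)
                        \<and> (Im z = 0 \<or> Im (sector_reflect \<theta> z) = 0)}"
    unfolding sector_eq_halfplanes[OF assms] by auto
  finally show ?thesis .
qed

lemma sector_reflect_frontier_sector:
  assumes "0 < \<theta>" "\<theta> \<le> pi"
  shows "sector_reflect \<theta> ` frontier (sector \<theta>) = frontier (sector \<theta>)"
proof -
  have maps_to: "sector_reflect \<theta> z \<in> frontier (sector \<theta>)" if "z \<in> frontier (sector \<theta>)" for z
    using that unfolding frontier_sector[OF assms] by auto
  then have "frontier (sector \<theta>) \<subseteq> sector_reflect \<theta> ` frontier (sector \<theta>)"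
    by (metis image_eqI sector_reflect_involutive subsetI)
  with maps_to show ?thesis by blast
qed

lemma tri_ratio_sector_reflect:
  assumes "0 < \<theta>" "\<theta> \<le> pi"
  shows "tri_ratio (sector \<theta>) (sector_reflect \<theta> x) (sector_reflect \<theta> y) = tri_ratio (sector \<theta>) x y"
proof -
  let ?R = "sector_reflect \<theta>"
  have "(INF z\<in>frontier (sector \<theta>). cmod (?R x - z) + cmod (z - ?R y))
      = (INF z\<in>?R ` frontier (sector \<theta>). cmod (?R x - z) + cmod (z - ?R y))"
    by (simp only: sector_reflect_frontier_sector[OF assms])
  also have "\<dots> = (INF z\<in>frontier (sector \<theta>). cmod (x - z) + cmod (z - y))"
    by (simp add: image_image norm_sector_reflect_diff)
  finally show ?thesis by (simp add: tri_ratio_def norm_sector_reflect_diff)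
qed

lemma dist_cnj_le_via_real:
  assumes "Im z = 0"
  shows "cmod (x - cnj y) \<le> cmod (x - z) + cmod (z - y)"
proof -
  have "cmod (z - y) = cmod (z - cnj y)"
    using assms by (metis complex_cnj_diff complex_mod_cnj Reals_cnj_iff complex_is_Real_iff)
  then show ?thesis using norm_diff_triangle_ineq[of x z z "cnj y"] by simp
qed

text \<open>The point \<open>z\<close> is where the segment from \<open>x\<close> to \<open>cnj y\<close> crosses the real axis.\<close>
lemma exists_real_dist_eq_cnj:
  assumes "0 < Im x" "0 < Im y"
  obtains z where "Im z = 0" "Re z * (Im x + Im y) = Im (x * y)"
    "cmod (x - z) + cmod (z - y) = cmod (x - cnj y)"
proof
  define s where "s = Im x / (Im x + Im y)"
  define z where "z = x + of_real s * (cnj y - x)"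
  have "0 \<le> s" "s \<le> 1" "s * (Im x + Im y) = Im x" using assms by (auto simp: s_def)
  then show "Im z = 0" "Re z * (Im x + Im y) = Im (x * y)"
    using assms by (auto simp: z_def s_def field_simps)
  have "cmod (z - y) = cmod (z - cnj y)"
    using \<open>Im z = 0\<close> by (metis complex_cnj_diff complex_mod_cnj Reals_cnj_iff complex_is_Real_iff)
  moreover have "x - z = of_real s * (x - cnj y)" "z - cnj y = of_real (1 - s) * (x - cnj y)"
    by (simp_all add: z_def algebra_simps)
  then have "cmod (x - z) = \<bar>s\<bar> * cmod (x - cnj y)" "cmod (z - cnj y) = \<bar>1 - s\<bar> * cmod (x - cnj y)"
    by (simp_all only: norm_mult norm_of_real)
  ultimately show "cmod (x - z) + cmod (z - y) = cmod (x - cnj y)"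
    using \<open>0 \<le> s\<close> \<open>s \<le> 1\<close> by (simp add: algebra_simps)
qed

lemma cmod_rcis_diff_sq:
  "(cmod (rcis r a - rcis q b))\<^sup>2 = (r - q)\<^sup>2 + 4 * r * q * (sin ((a - b) / 2))\<^sup>2"
proof -
  have "(cmod (rcis r a - rcis q b))\<^sup>2 = (r * cos a - q * cos b)\<^sup>2 + (r * sin a - q * sin b)\<^sup>2"
    by (simp add: cmod_power2)
  also have "\<dots> = r\<^sup>2 * ((sin a)\<^sup>2 + (cos a)\<^sup>2) + q\<^sup>2 * ((sin b)\<^sup>2 + (cos b)\<^sup>2)
      - 2 * r * q * (cos a * cos b + sin a * sin b)"
    unfolding power2_eq_square by algebra
  also have "\<dots> = r\<^sup>2 + q\<^sup>2 - 2 * r * q * cos (a - b)"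
    by (simp only: sin_cos_squared_add cos_diff)
  also have "cos (a - b) = cos (2 * ((a - b) / 2))" by (simp only: mult_2 field_sum_of_halves)
  also have "\<dots> = 1 - 2 * (sin ((a - b) / 2))\<^sup>2" by (rule cos_double_sin)
  finally show ?thesis by (simp add: power2_eq_square algebra_simps)
qed

lemma cnj_rcis: "cnj (rcis r a) = rcis r (- a)"
  by (simp add: rcis_def cis_cnj)

lemma dist_cnj_le_dist_cnj_reflect:
  assumes "0 \<le> r" "0 \<le> \<rho>" "0 \<le> \<theta>" "\<theta> \<le> pi" "0 \<le> \<phi> + \<psi>" "\<phi> + \<psi> \<le> \<theta>"
  shows "cmod (rcis r \<phi> - cnj (rcis \<rho> \<psi>))
           \<le> cmod (sector_reflect \<theta> (rcis r \<phi>) - cnj (sector_reflect \<theta> (rcis \<rho> \<psi>)))"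
proof -
  define A B where "A = (\<phi> - - \<psi>) / 2" and "B = ((\<theta> - \<phi>) - - (\<theta> - \<psi>)) / 2"
  have "B + A = \<theta>" "B - A = \<theta> - (\<phi> + \<psi>)" by (simp_all add: A_def B_def field_simps)
  then have "(sin B)\<^sup>2 - (sin A)\<^sup>2 = sin \<theta> * sin (\<theta> - (\<phi> + \<psi>))" by (simp only: sin_sq_diff)
  also have "\<dots> \<ge> 0" using assms by (intro mult_nonneg_nonneg sin_ge_zero) auto
  finally have "4 * r * \<rho> * (sin A)\<^sup>2 \<le> 4 * r * \<rho> * (sin B)\<^sup>2"
    using assms by (intro mult_left_mono) auto
  then have "(cmod (rcis r \<phi> - cnj (rcis \<rho> \<psi>)))\<^sup>2
      \<le> (cmod (sector_reflect \<theta> (rcis r \<phi>) - cnj (sector_reflect \<theta> (rcis \<rho> \<psi>))))\<^sup>2"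
    by (simp only: A_def B_def sector_reflect_rcis cnj_rcis cmod_rcis_diff_sq add_le_cancel_left)
  then show ?thesis by (simp add: power2_le_iff_abs_le)
qed

lemma dist_cnj_le_sector_boundary_path:
  assumes \<theta>: "0 < \<theta>" "\<theta> \<le> pi" and r: "0 \<le> r" "0 \<le> \<rho>"
    and ang: "0 \<le> \<phi> + \<psi>" "\<phi> + \<psi> \<le> \<theta>" and z: "z \<in> frontier (sector \<theta>)"
  shows "cmod (rcis r \<phi> - cnj (rcis \<rho> \<psi>)) \<le> cmod (rcis r \<phi> - z) + cmod (z - rcis \<rho> \<psi>)"
proof -
  let ?R = "sector_reflect \<theta>"
  have "Im z = 0 \<or> Im (?R z) = 0" using z by (simp add: frontier_sector[OF \<theta>])
  then show ?thesis
  proof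
    assume "Im (?R z) = 0"
    then have "cmod (?R (rcis r \<phi>) - cnj (?R (rcis \<rho> \<psi>)))
        \<le> cmod (?R (rcis r \<phi>) - ?R z) + cmod (?R z - ?R (rcis \<rho> \<psi>))"
      by (rule dist_cnj_le_via_real)
    with dist_cnj_le_dist_cnj_reflect[of r \<rho> \<theta> \<phi> \<psi>] r \<theta> ang show ?thesis
      by (simp add: norm_sector_reflect_diff)
  qed (rule dist_cnj_le_via_real)
qed

lemma sector_boundary_INF_eq_cnj:
  assumes \<theta>: "0 < \<theta>" "\<theta> \<le> pi" and r: "0 < r" "0 < \<rho>"
    and ang: "0 < \<phi>" "0 < \<psi>" "\<phi> + \<psi> \<le> \<theta>"
  shows "(INF z\<in>frontier (sector \<theta>). cmod (rcis r \<phi> - z) + cmod (z - rcis \<rho> \<psi>))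
           = cmod (rcis r \<phi> - cnj (rcis \<rho> \<psi>))"
proof -
  define x y where "x = rcis r \<phi>" and "y = rcis \<rho> \<psi>"
  let ?F = "frontier (sector \<theta>)" and ?g = "\<lambda>z. cmod (x - z) + cmod (z - y)"
  have "0 < sin \<phi>" "0 < sin \<psi>" using \<theta> ang by (auto intro!: sin_gt_zero)
  then have "0 < Im x" "0 < Im y" using r by (simp_all add: x_def y_def)
  then obtain z0 where z0: "Im z0 = 0" "Re z0 * (Im x + Im y) = Im (x * y)" "?g z0 = cmod (x - cnj y)"
    by (rule exists_real_dist_eq_cnj)
  have "Im (x * y) = r * \<rho> * sin (\<phi> + \<psi>)" by (simp add: x_def y_def rcis_mult)
  also have "\<dots> \<ge> 0" using r \<theta> ang by (intro mult_nonneg_nonneg sin_ge_zero) auto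
  finally have "0 \<le> Re z0 * (Im x + Im y)" using z0(2) by simp
  then have "0 \<le> Re z0" using \<open>0 < Im x\<close> \<open>0 < Im y\<close> by (simp add: zero_le_mult_iff)
  moreover have "Im (sector_reflect \<theta> z0) = sin \<theta> * Re z0" using z0(1) by (simp add: sector_reflect_def)
  moreover have "0 \<le> sin \<theta>" using \<theta> by (simp add: sin_ge_zero)
  ultimately have "z0 \<in> ?F" using z0(1) by (simp add: frontier_sector[OF \<theta>])
  have "bdd_below (?g ` ?F)" by (rule bdd_belowI[of _ 0]) auto
  then have "(INF z\<in>?F. ?g z) \<le> ?g z0" using \<open>z0 \<in> ?F\<close> by (rule cINF_lower)
  moreover have "cmod (x - cnj y) \<le> ?g z" if "z \<in> ?F" for z
    unfolding x_def y_def using dist_cnj_le_sector_boundary_path[OF \<theta> _ _ _ _ that] r ang by simp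
  then have "cmod (x - cnj y) \<le> (INF z\<in>?F. ?g z)"
    using \<open>z0 \<in> ?F\<close> by (intro cINF_greatest) blast+
  ultimately show ?thesis using z0(3) by (simp add: x_def y_def)
qed

lemma sinh_half_ln_sq:
  fixes r q :: real
  assumes "0 < r" "0 < q"
  shows "(sinh (ln (r / q) / 2))\<^sup>2 = (r - q)\<^sup>2 / (4 * r * q)"
proof -
  have "(sinh t)\<^sup>2 = (cosh (2 * t) - 1) / 2" for t :: real
    by (simp add: cosh_double cosh_square_eq)
  from this[of "ln (r / q) / 2"] have "(sinh (ln (r / q) / 2))\<^sup>2 = (cosh (ln (r / q)) - 1) / 2"
    by simp
  also have "cosh (ln (r / q)) = (r / q + inverse (r / q)) / 2"
    using assms by (simp add: cosh_ln_real)
  finally show ?thesis using assms by (simp add: field_simps power2_eq_square)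
qed

lemma tri_ratio_sector_rcis:
  assumes \<theta>: "0 < \<theta>" "\<theta> \<le> pi" and r: "0 < r" "0 < \<rho>"
    and ang: "0 < \<phi>" "\<phi> < \<theta>" "0 < \<psi>" "\<psi> < \<theta>"
  shows "tri_ratio (sector \<theta>) (rcis r \<phi>) (rcis \<rho> \<psi>)
           = sqrt (polar_tri_ratio_sq (ln (r / \<rho>) / 2) (\<bar>\<phi> - \<psi>\<bar> / 2) (min (\<phi> + \<psi>) (2 * \<theta> - (\<phi> + \<psi>)) / 2))"
proof -
  define L where "L = ln (r / \<rho>) / 2"
  have dist_sq: "(cmod (rcis r a - rcis \<rho> b))\<^sup>2 = 4 * r * \<rho> * ((sinh L)\<^sup>2 + (sin (\<bar>a - b\<bar> / 2))\<^sup>2)" for a b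
  proof -
    have "(sin (\<bar>t\<bar> / 2))\<^sup>2 = (sin (t / 2))\<^sup>2" for t :: real
      by (cases "0 \<le> t") (simp_all add: power2_eq_square)
    from this[of "a - b"] show ?thesis using r by (simp add: L_def cmod_rcis_diff_sq sinh_half_ln_sq field_simps)
  qed
  have below_bisector:
    "tri_ratio (sector \<theta>) (rcis r a) (rcis \<rho> b) = sqrt (polar_tri_ratio_sq L (\<bar>a - b\<bar> / 2) ((a + b) / 2))"
    if "0 < a" "0 < b" "a + b \<le> \<theta>" for a b
  proof -
    have "tri_ratio (sector \<theta>) (rcis r a) (rcis \<rho> b) = cmod (rcis r a - rcis \<rho> b) / cmod (rcis r a - rcis \<rho> (- b))"
      by (simp add: tri_ratio_def sector_boundary_INF_eq_cnj[OF \<theta> r that] cnj_rcis)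
    also have "\<dots> = sqrt ((cmod (rcis r a - rcis \<rho> b))\<^sup>2 / (cmod (rcis r a - rcis \<rho> (- b)))\<^sup>2)"
      by (simp add: real_sqrt_divide)
    also have "\<dots> = sqrt (polar_tri_ratio_sq L (\<bar>a - b\<bar> / 2) ((a + b) / 2))"
      using that r by (simp add: dist_sq polar_tri_ratio_sq_def)
    finally show ?thesis .
  qed
  show ?thesis
  proof (cases "\<phi> + \<psi> \<le> \<theta>")
    case True
    then show ?thesis using below_bisector[OF ang(1,3) True] by (simp add: L_def)
  next
    case False
    have "tri_ratio (sector \<theta>) (rcis r \<phi>) (rcis \<rho> \<psi>) = tri_ratio (sector \<theta>) (rcis r (\<theta> - \<phi>)) (rcis \<rho> (\<theta> - \<psi>))"
      using tri_ratio_sector_reflect[OF \<theta>, of "rcis r \<phi>" "rcis \<rho> \<psi>"] by (simp add: sector_reflect_rcis)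
    also have "\<dots> = sqrt (polar_tri_ratio_sq L (\<bar>\<phi> - \<psi>\<bar> / 2) ((2 * \<theta> - (\<phi> + \<psi>)) / 2))"
      using below_bisector[of "\<theta> - \<phi>" "\<theta> - \<psi>"] False ang by (simp add: abs_minus_commute algebra_simps)
    finally show ?thesis using False by (simp add: L_def)
  qed
qed

section \<open>The power map\<close>

lemma sector_pow_rcis:
  assumes "0 < r" "- pi < \<phi>" "\<phi> \<le> pi"
  shows "sector_pow \<alpha> \<beta> (rcis r \<phi>) = rcis (r powr (\<beta> / \<alpha>)) (\<beta> / \<alpha> * \<phi>)"
proof -
  have "sector_pow \<alpha> \<beta> (rcis r \<phi>) = exp (complex_of_real (\<beta> / \<alpha>) * Complex (ln r) \<phi>)"
    using assms by (simp add: sector_pow_def powr_def Ln_rcis)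
  also have "complex_of_real (\<beta> / \<alpha>) * Complex (ln r) \<phi> = Complex (\<beta> / \<alpha> * ln r) (\<beta> / \<alpha> * \<phi>)"
    by (simp add: complex_eq_iff)
  also have "exp \<dots> = rcis (r powr (\<beta> / \<alpha>)) (\<beta> / \<alpha> * \<phi>)"
    using assms by (simp add: exp_eq_polar exp_of_real rcis_def powr_def)
  finally show ?thesis .
qed

lemma tri_ratio_sector_pow_polar:
  assumes \<alpha>: "0 < \<alpha>" "\<alpha> \<le> pi" and \<beta>: "0 < \<beta>" "\<beta> \<le> pi"
    and xy: "x \<in> sector \<alpha>" "y \<in> sector \<alpha>"
  obtains L a b where "0 \<le> a" "a \<le> b" "0 < b" "b \<le> \<alpha> / 2"
    "tri_ratio (sector \<alpha>) x y = sqrt (polar_tri_ratio_sq L a b)"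
    "tri_ratio (sector \<beta>) (sector_pow \<alpha> \<beta> x) (sector_pow \<alpha> \<beta> y)
       = sqrt (polar_tri_ratio_sq (\<beta> / \<alpha> * L) (\<beta> / \<alpha> * a) (\<beta> / \<alpha> * b))"
proof
  define k where "k = \<beta> / \<alpha>"
  define r where "r = cmod x"
  define \<phi> where "\<phi> = Arg x"
  define \<rho> where "\<rho> = cmod y"
  define \<psi> where "\<psi> = Arg y"
  have ang: "0 < \<phi>" "\<phi> < \<alpha>" "0 < \<psi>" "\<psi> < \<alpha>" using xy by (auto simp: sector_def \<phi>_def \<psi>_def)
  then have "x \<noteq> 0" "y \<noteq> 0" by (auto simp: \<phi>_def \<psi>_def Arg_zero)
  then have r: "0 < r" "0 < \<rho>" by (simp_all add: r_def \<rho>_def)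
  have xy_polar: "x = rcis r \<phi>" "y = rcis \<rho> \<psi>" by (simp_all add: r_def \<phi>_def \<rho>_def \<psi>_def rcis_cmod_Arg)
  have "0 < k" "k * \<alpha> = \<beta>" using \<alpha> \<beta> by (simp_all add: k_def)
  then have ang': "0 < k * \<phi>" "k * \<phi> < \<beta>" "0 < k * \<psi>" "k * \<psi> < \<beta>"
    using ang by (simp_all flip: \<open>k * \<alpha> = \<beta>\<close>)
  define L where "L = ln (r / \<rho>) / 2"
  define a where "a = \<bar>\<phi> - \<psi>\<bar> / 2"
  define b where "b = min (\<phi> + \<psi>) (2 * \<alpha> - (\<phi> + \<psi>)) / 2"
  show "0 \<le> a" "a \<le> b" "0 < b" "b \<le> \<alpha> / 2" using ang by (auto simp: a_def b_def)
  show "tri_ratio (sector \<alpha>) x y = sqrt (polar_tri_ratio_sq L a b)"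
    unfolding xy_polar L_def a_def b_def by (rule tri_ratio_sector_rcis[OF \<alpha> r ang])
  have "- pi < \<phi>" "\<phi> \<le> pi" "- pi < \<psi>" "\<psi> \<le> pi" using ang \<alpha> by linarith+
  then have "sector_pow \<alpha> \<beta> x = rcis (r powr k) (k * \<phi>)" "sector_pow \<alpha> \<beta> y = rcis (\<rho> powr k) (k * \<psi>)"
    unfolding xy_polar k_def by (simp_all add: sector_pow_rcis r)
  moreover have "ln (r powr k / \<rho> powr k) / 2 = k * L" using r by (simp add: L_def ln_div algebra_simps)
  moreover have "\<bar>k * \<phi> - k * \<psi>\<bar> / 2 = k * a" using \<open>0 < k\<close> by (simp add: a_def abs_mult flip: right_diff_distrib)
  moreover have "min (k * \<phi> + k * \<psi>) (2 * \<beta> - (k * \<phi> + k * \<psi>)) / 2 = k * b"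
    using \<open>0 < k\<close> by (simp add: b_def min_mult_distrib_left algebra_simps flip: \<open>k * \<alpha> = \<beta>\<close>)
  ultimately show "tri_ratio (sector \<beta>) (sector_pow \<alpha> \<beta> x) (sector_pow \<alpha> \<beta> y)
      = sqrt (polar_tri_ratio_sq (\<beta> / \<alpha> * L) (\<beta> / \<alpha> * a) (\<beta> / \<alpha> * b))"
    using tri_ratio_sector_rcis[OF \<beta> _ _ ang', of "r powr k" "\<rho> powr k"] r by (simp add: k_def)
qed

lemma tri_ratio_sector_pow_bounds:
  assumes \<alpha>: "0 < \<alpha>" "\<alpha> \<le> pi" and \<beta>: "0 < \<beta>" "\<beta> \<le> pi"
    and xy: "x \<in> sector \<alpha>" "y \<in> sector \<alpha>"
  defines "C \<equiv> \<beta> * sin (\<alpha> / 2) / (\<alpha> * sin (\<beta> / 2))"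
    and "s \<equiv> tri_ratio (sector \<alpha>) x y"
    and "s' \<equiv> tri_ratio (sector \<beta>) (sector_pow \<alpha> \<beta> x) (sector_pow \<alpha> \<beta> y)"
  shows "\<alpha> \<le> \<beta> \<Longrightarrow> s \<le> s' \<and> s' \<le> C * s"
    and "\<beta> < \<alpha> \<Longrightarrow> C * s \<le> s' \<and> s' \<le> s"
proof -
  define k where "k = \<beta> / \<alpha>"
  obtain L a b where ab: "0 \<le> a" "a \<le> b" "0 < b" "b \<le> \<alpha> / 2"
    and s: "s = sqrt (polar_tri_ratio_sq L a b)"
    and s': "s' = sqrt (polar_tri_ratio_sq (k * L) (k * a) (k * b))"
    using tri_ratio_sector_pow_polar[OF \<alpha> \<beta> xy] unfolding s_def s'_def k_def by metis
  have "0 < sin (\<alpha> / 2)" "0 < sin (\<beta> / 2)" using \<alpha> \<beta> by (simp_all add: sin_gt_zero)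
  then have "0 < C" using \<alpha> \<beta> by (simp add: C_def)
  have "k * \<alpha> = \<beta>" using \<alpha> by (simp add: k_def)
  show "s \<le> s' \<and> s' \<le> C * s" if "\<alpha> \<le> \<beta>"
  proof -
    have "1 \<le> k" using that \<alpha> by (simp add: k_def)
    note bounds = polar_tri_ratio_sq_scaled_bounds[OF this ab, of L]
    have "k * sin (\<alpha> / 2) / sin (k * \<alpha> / 2) = C"
      using \<alpha> by (simp add: C_def k_def \<open>k * \<alpha> = \<beta>\<close>)
    with bounds \<beta> \<open>k * \<alpha> = \<beta>\<close> have "s \<le> s'" "s' \<le> sqrt (C\<^sup>2 * polar_tri_ratio_sq L a b)"
      unfolding s s' by (auto intro: real_sqrt_le_mono)
    then show ?thesis using \<open>0 < C\<close> by (simp add: s real_sqrt_mult)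
  qed
  show "C * s \<le> s' \<and> s' \<le> s" if "\<beta> < \<alpha>"
  proof -
    define K where "K = \<alpha> / \<beta>"
    have "1 \<le> K" "K * \<beta> \<le> pi" using that \<alpha> \<beta> by (simp_all add: K_def)
    have K_k: "K * (k * t) = t" for t using \<alpha> \<beta> by (simp add: K_def k_def)
    have "0 < k" using \<alpha> \<beta> by (simp add: k_def)
    then have "k * b \<le> k * (\<alpha> / 2)" using ab by (intro mult_left_mono) simp_all
    then have "0 \<le> k * a" "k * a \<le> k * b" "0 < k * b" "k * b \<le> \<beta> / 2"
      using ab \<open>0 < k\<close> \<open>k * \<alpha> = \<beta>\<close> by simp_all
    note bounds = polar_tri_ratio_sq_scaled_bounds[OF \<open>1 \<le> K\<close> this \<open>K * \<beta> \<le> pi\<close>, of "k * L", unfolded K_k]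
    have "K * sin (\<beta> / 2) / sin (K * \<beta> / 2) = 1 / C"
      using \<alpha> \<beta> by (simp add: C_def K_def)
    with bounds have "s' \<le> s" "s \<le> sqrt ((1 / C)\<^sup>2 * polar_tri_ratio_sq (k * L) (k * a) (k * b))"
      unfolding s s' by (auto intro: real_sqrt_le_mono)
    moreover have "sqrt ((1 / C)\<^sup>2 * polar_tri_ratio_sq (k * L) (k * a) (k * b)) = s' / C"
      using \<open>0 < C\<close> by (simp add: s' real_sqrt_mult)
    ultimately show ?thesis using \<open>0 < C\<close> by (simp add: pos_le_divide_eq mult.commute)
  qed
qed

section \<open>Sharpness\<close>

lemma tendsto_quotient_witness:
  fixes g h :: "'a \<Rightarrow> real"
  assumes lim: "((\<lambda>x. g x / h x) \<longlongrightarrow> l) F" and "F \<noteq> bot"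
    and ev: "\<forall>\<^sub>F x in F. P x \<and> 0 < h x"
  shows "l < c \<Longrightarrow> \<exists>x. P x \<and> g x < c * h x"
    and "c < l \<Longrightarrow> \<exists>x. P x \<and> c * h x < g x"
proof -
  assume "l < c"
  have "\<forall>\<^sub>F x in F. (P x \<and> 0 < h x) \<and> g x / h x < c"
    using ev order_tendstoD(2)[OF lim \<open>l < c\<close>] by (rule eventually_conj)
  then obtain x where "P x" "0 < h x" "g x / h x < c"
    using eventually_happens'[OF \<open>F \<noteq> bot\<close>] by blast
  then show "\<exists>x. P x \<and> g x < c * h x" by (auto simp: divide_less_eq)
next
  assume "c < l"
  have "\<forall>\<^sub>F x in F. (P x \<and> 0 < h x) \<and> c < g x / h x"
    using ev order_tendstoD(1)[OF lim \<open>c < l\<close>] by (rule eventually_conj)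
  then obtain x where "P x" "0 < h x" "c < g x / h x"
    using eventually_happens'[OF \<open>F \<noteq> bot\<close>] by blast
  then show "\<exists>x. P x \<and> c * h x < g x" by (auto simp: less_divide_eq)
qed

lemma polar_tri_ratio_sq_tendsto_at_top:
  fixes c b :: real
  assumes "0 < c"
  shows "((\<lambda>L. polar_tri_ratio_sq (c * L) 0 b) \<longlongrightarrow> 1) at_top"
proof -
  have "filterlim (\<lambda>L. c * L) at_top at_top"
    by (rule filterlim_tendsto_pos_mult_at_top[OF tendsto_const assms filterlim_ident])
  then have "filterlim (\<lambda>L. sinh (c * L)) at_top at_top"
    by (rule filterlim_compose[OF sinh_real_at_top])
  then have "filterlim (\<lambda>L. (sinh (c * L))\<^sup>2) at_top at_top"
    by (rule filterlim_pow_at_top[rotated]) simp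
  then have "filterlim (\<lambda>L. (sin b)\<^sup>2 + (sinh (c * L))\<^sup>2) at_top at_top"
    by (rule filterlim_tendsto_add_at_top[OF tendsto_const])
  then have "((\<lambda>L. 1 - (sin b)\<^sup>2 / ((sin b)\<^sup>2 + (sinh (c * L))\<^sup>2)) \<longlongrightarrow> 1 - 0) at_top"
    by (intro tendsto_intros tendsto_divide_0[OF tendsto_const] filterlim_at_top_imp_at_infinity)
  moreover have "\<forall>\<^sub>F L in at_top. 1 - (sin b)\<^sup>2 / ((sin b)\<^sup>2 + (sinh (c * L))\<^sup>2)
      = polar_tri_ratio_sq (c * L) 0 b"
    using eventually_gt_at_top[of 0]
    by eventually_elim (use assms in \<open>simp add: polar_tri_ratio_sq_def field_simps add_pos_nonneg\<close>)
  ultimately show ?thesis by (simp add: tendsto_cong)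
qed

lemma sinh_mult_div_tendsto_0:
  fixes k :: real
  shows "((\<lambda>L. sinh (k * L) / L) \<longlongrightarrow> k) (at 0)"
proof -
  have "((\<lambda>L. sinh (k * L)) has_field_derivative k) (at 0)"
    by (auto intro!: derivative_eq_intros)
  then show ?thesis by (simp add: has_field_derivative_iff)
qed

lemma polar_tri_ratio_sq_quotient_tendsto_0:
  fixes k b b' :: real
  assumes "sin b \<noteq> 0" "sin b' \<noteq> 0"
  shows "((\<lambda>L. polar_tri_ratio_sq (k * L) 0 b' / polar_tri_ratio_sq L 0 b)
           \<longlongrightarrow> (k * sin b / sin b')\<^sup>2) (at 0)"
proof -
  have "((\<lambda>L. ((sinh (k * L) / L) / (sinh (1 * L) / L))\<^sup>2
             * (((sinh L)\<^sup>2 + (sin b)\<^sup>2) / ((sinh (k * L))\<^sup>2 + (sin b')\<^sup>2)))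
        \<longlongrightarrow> (k / 1)\<^sup>2 * (((sinh 0)\<^sup>2 + (sin b)\<^sup>2) / ((sinh (k * 0))\<^sup>2 + (sin b')\<^sup>2))) (at 0)"
    using assms
    by (intro tendsto_intros sinh_mult_div_tendsto_0 tendsto_ident_at) simp_all
  moreover have "\<forall>\<^sub>F L in at 0. ((sinh (k * L) / L) / (sinh (1 * L) / L))\<^sup>2
             * (((sinh L)\<^sup>2 + (sin b)\<^sup>2) / ((sinh (k * L))\<^sup>2 + (sin b')\<^sup>2))
      = polar_tri_ratio_sq (k * L) 0 b' / polar_tri_ratio_sq L 0 b"
    using eventually_neq_at_within[of 0 0 UNIV]
    by eventually_elim (use assms in \<open>simp add: polar_tri_ratio_sq_def field_simps power2_eq_square\<close>)
  ultimately show ?thesis using assms by (simp add: tendsto_cong power_divide power_mult_distrib)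
qed

lemma tri_ratio_sector_pow_on_bisector:
  assumes \<alpha>: "0 < \<alpha>" "\<alpha> \<le> pi" and \<beta>: "0 < \<beta>" "\<beta> \<le> pi" and "L \<noteq> 0"
  shows "\<exists>x\<in>sector \<alpha>. \<exists>y\<in>sector \<alpha>. x \<noteq> y
           \<and> tri_ratio (sector \<alpha>) x y = sqrt (polar_tri_ratio_sq L 0 (\<alpha> / 2))
           \<and> tri_ratio (sector \<beta>) (sector_pow \<alpha> \<beta> x) (sector_pow \<alpha> \<beta> y)
               = sqrt (polar_tri_ratio_sq (\<beta> / \<alpha> * L) 0 (\<beta> / 2))"
proof -
  define k where "k = \<beta> / \<alpha>"
  define x where "x = rcis (exp (2 * L)) (\<alpha> / 2)"
  define y where "y = rcis 1 (\<alpha> / 2)"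
  have "rcis r (\<theta> / 2) \<in> sector \<theta>" if "0 < r" "0 < \<theta>" "\<theta> \<le> pi" for r \<theta>
    using that by (simp add: sector_def Arg_rcis)
  then have "x \<in> sector \<alpha>" "y \<in> sector \<alpha>" using \<alpha> by (simp_all add: x_def y_def)
  have "cmod x \<noteq> cmod y" using \<open>L \<noteq> 0\<close> by (simp add: x_def y_def)
  then have "x \<noteq> y" by blast
  have "tri_ratio (sector \<alpha>) x y = sqrt (polar_tri_ratio_sq L 0 (\<alpha> / 2))"
    using tri_ratio_sector_rcis[OF \<alpha>, of "exp (2 * L)" 1 "\<alpha> / 2" "\<alpha> / 2"] \<alpha> by (simp add: x_def y_def)
  have "k * (\<alpha> / 2) = \<beta> / 2" using \<alpha> by (simp add: k_def)
  then have "sector_pow \<alpha> \<beta> (rcis r (\<alpha> / 2)) = rcis (r powr k) (\<beta> / 2)" if "0 < r" for r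
    using that \<alpha> by (simp add: sector_pow_rcis flip: k_def)
  moreover have "exp (2 * L) powr k = exp (2 * (k * L))" by (simp add: powr_def)
  ultimately have "tri_ratio (sector \<beta>) (sector_pow \<alpha> \<beta> x) (sector_pow \<alpha> \<beta> y)
      = sqrt (polar_tri_ratio_sq (k * L) 0 (\<beta> / 2))"
    using tri_ratio_sector_rcis[OF \<beta>, of "exp (2 * (k * L))" 1 "\<beta> / 2" "\<beta> / 2"] \<beta>
    by (simp add: x_def y_def)
  with \<open>x \<in> sector \<alpha>\<close> \<open>y \<in> sector \<alpha>\<close> \<open>x \<noteq> y\<close> \<open>tri_ratio (sector \<alpha>) x y = _\<close> show ?thesis
    by (auto simp: k_def)
qed

lemma bisector_tri_ratio_quotient_tendsto:
  assumes \<alpha>: "0 < \<alpha>" "\<alpha> \<le> pi" and \<beta>: "0 < \<beta>" "\<beta> \<le> pi"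
  defines "C \<equiv> \<beta> * sin (\<alpha> / 2) / (\<alpha> * sin (\<beta> / 2))"
    and "q \<equiv> \<lambda>L. sqrt (polar_tri_ratio_sq (\<beta> / \<alpha> * L) 0 (\<beta> / 2)) / sqrt (polar_tri_ratio_sq L 0 (\<alpha> / 2))"
  shows "(q \<longlongrightarrow> 1) at_top" and "(q \<longlongrightarrow> C) (at 0)"
proof -
  have "0 < \<beta> / \<alpha>" using \<alpha> \<beta> by simp
  show "(q \<longlongrightarrow> 1) at_top"
    using polar_tri_ratio_sq_tendsto_at_top[OF \<open>0 < \<beta> / \<alpha>\<close>] polar_tri_ratio_sq_tendsto_at_top[of 1]
      tendsto_divide[OF tendsto_real_sqrt tendsto_real_sqrt]
    by (fastforce simp: q_def)
  have sin_pos: "0 < sin (\<alpha> / 2)" "0 < sin (\<beta> / 2)" using \<alpha> \<beta> by (simp_all add: sin_gt_zero)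
  then have "0 < C" using \<alpha> \<beta> by (simp add: C_def)
  have "(\<beta> / \<alpha> * sin (\<alpha> / 2) / sin (\<beta> / 2))\<^sup>2 = C\<^sup>2" by (simp add: C_def)
  then have "((\<lambda>L. sqrt (polar_tri_ratio_sq (\<beta> / \<alpha> * L) 0 (\<beta> / 2) / polar_tri_ratio_sq L 0 (\<alpha> / 2)))
      \<longlongrightarrow> sqrt (C\<^sup>2)) (at 0)"
    using polar_tri_ratio_sq_quotient_tendsto_0[of "\<alpha> / 2" "\<beta> / 2" "\<beta> / \<alpha>"] sin_pos
    by (intro tendsto_real_sqrt) simp
  then show "(q \<longlongrightarrow> C) (at 0)" using \<open>0 < C\<close> by (simp add: q_def real_sqrt_divide)
qed

lemma tri_ratio_sector_pow_sharp:
  assumes \<alpha>: "0 < \<alpha>" "\<alpha> \<le> pi" and \<beta>: "0 < \<beta>" "\<beta> \<le> pi"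
  defines "C \<equiv> \<beta> * sin (\<alpha> / 2) / (\<alpha> * sin (\<beta> / 2))"
  assumes l: "l \<in> {1, C}"
  shows "l < c \<Longrightarrow> \<exists>x\<in>sector \<alpha>. \<exists>y\<in>sector \<alpha>. x \<noteq> y \<and>
           tri_ratio (sector \<beta>) (sector_pow \<alpha> \<beta> x) (sector_pow \<alpha> \<beta> y) < c * tri_ratio (sector \<alpha>) x y"
    and "c < l \<Longrightarrow> \<exists>x\<in>sector \<alpha>. \<exists>y\<in>sector \<alpha>. x \<noteq> y \<and>
           c * tri_ratio (sector \<alpha>) x y < tri_ratio (sector \<beta>) (sector_pow \<alpha> \<beta> x) (sector_pow \<alpha> \<beta> y)"
proof -
  define h where "h L = sqrt (polar_tri_ratio_sq L 0 (\<alpha> / 2))" for L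
  define g where "g L = sqrt (polar_tri_ratio_sq (\<beta> / \<alpha> * L) 0 (\<beta> / 2))" for L
  have "0 < sin (\<alpha> / 2)" using \<alpha> by (simp add: sin_gt_zero)
  have h_pos: "\<forall>\<^sub>F L in F. 0 < h L" if "\<forall>\<^sub>F L in F. L \<noteq> 0" for F
    using that
    by eventually_elim (use \<open>0 < sin (\<alpha> / 2)\<close> in \<open>simp add: h_def polar_tri_ratio_sq_def add_pos_nonneg\<close>)
  obtain F where "F \<noteq> bot" "((\<lambda>L. g L / h L) \<longlongrightarrow> l) F" "\<forall>\<^sub>F L in F. L \<noteq> 0"
  proof (cases "l = 1")
    case True
    then show ?thesis
      using that[of at_top] bisector_tri_ratio_quotient_tendsto(1)[OF \<alpha> \<beta>] eventually_gt_at_top[of "0::real"]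
      by (force simp: g_def h_def elim: eventually_mono)
  next
    case False
    then show ?thesis
      using that[of "at 0"] l bisector_tri_ratio_quotient_tendsto(2)[OF \<alpha> \<beta>] eventually_neq_at_within[of 0 0 UNIV]
      by (simp add: g_def h_def C_def)
  qed
  note quotient_witness = tendsto_quotient_witness[OF this(2,1) eventually_conj[OF this(3) h_pos[OF this(3)]]]
  note bisector = tri_ratio_sector_pow_on_bisector[OF \<alpha> \<beta>, folded h_def g_def]
  show "\<exists>x\<in>sector \<alpha>. \<exists>y\<in>sector \<alpha>. x \<noteq> y \<and>
      tri_ratio (sector \<beta>) (sector_pow \<alpha> \<beta> x) (sector_pow \<alpha> \<beta> y) < c * tri_ratio (sector \<alpha>) x y"
    if "l < c" using quotient_witness(1)[OF that] bisector by metis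
  show "\<exists>x\<in>sector \<alpha>. \<exists>y\<in>sector \<alpha>. x \<noteq> y \<and>
      c * tri_ratio (sector \<alpha>) x y < tri_ratio (sector \<beta>) (sector_pow \<alpha> \<beta> x) (sector_pow \<alpha> \<beta> y)"
    if "c < l" using quotient_witness(2)[OF that] bisector by metis
qed

theorem lemma5p10:
  fixes \<alpha> \<beta> :: real
  assumes "0 < \<alpha>" "\<alpha> \<le> pi" "0 < \<beta>" "\<beta> \<le> pi"
  defines "C \<equiv> \<beta> * sin (\<alpha> / 2) / (\<alpha> * sin (\<beta> / 2))"
  defines "f \<equiv> sector_pow \<alpha> \<beta>"
  shows
   "(\<alpha> \<le> \<beta> \<longrightarrow>
       (\<forall>x\<in>sector \<alpha>. \<forall>y\<in>sector \<alpha>.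
          tri_ratio (sector \<alpha>) x y \<le> tri_ratio (sector \<beta>) (f x) (f y) \<and>
          tri_ratio (sector \<beta>) (f x) (f y) \<le> C * tri_ratio (sector \<alpha>) x y) \<and>
       (\<forall>\<epsilon>>0. \<exists>x\<in>sector \<alpha>. \<exists>y\<in>sector \<alpha>. x \<noteq> y \<and>
          tri_ratio (sector \<beta>) (f x) (f y) < (1 + \<epsilon>) * tri_ratio (sector \<alpha>) x y) \<and>
       (\<forall>\<epsilon>>0. \<exists>x\<in>sector \<alpha>. \<exists>y\<in>sector \<alpha>. x \<noteq> y \<and>
          (C - \<epsilon>) * tri_ratio (sector \<alpha>) x y < tri_ratio (sector \<beta>) (f x) (f y)))
    \<and>
    (\<beta> < \<alpha> \<longrightarrow>
       (\<forall>x\<in>sector \<alpha>. \<forall>y\<in>sector \<alpha>.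
          C * tri_ratio (sector \<alpha>) x y \<le> tri_ratio (sector \<beta>) (f x) (f y) \<and>
          tri_ratio (sector \<beta>) (f x) (f y) \<le> tri_ratio (sector \<alpha>) x y) \<and>
       (\<forall>\<epsilon>>0. \<exists>x\<in>sector \<alpha>. \<exists>y\<in>sector \<alpha>. x \<noteq> y \<and>
          tri_ratio (sector \<beta>) (f x) (f y) < (C + \<epsilon>) * tri_ratio (sector \<alpha>) x y) \<and>
       (\<forall>\<epsilon>>0. \<exists>x\<in>sector \<alpha>. \<exists>y\<in>sector \<alpha>. x \<noteq> y \<and>
          (1 - \<epsilon>) * tri_ratio (sector \<alpha>) x y < tri_ratio (sector \<beta>) (f x) (f y)))"
proof -
  note bounds = tri_ratio_sector_pow_bounds[OF assms(1-4), folded C_def f_def]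
  note sharp_1 = tri_ratio_sector_pow_sharp[OF assms(1-4), of 1, folded C_def f_def, simplified]
  note sharp_C = tri_ratio_sector_pow_sharp[OF assms(1-4), of C, folded C_def f_def, simplified]
  show ?thesis
    using bounds by (auto intro: sharp_1 sharp_C)
qed

end
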